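(* Let $\vec r:\mathbb{Z}\to\mathbb{R}^2$ be a nondegenerate discrete planar curve with constant first and second centroaffine curvatures which is closed with period $p$. Then $\vec r$ is centrosymmetric if and only if $p$ is even.
   Context: A discrete planar curve is a map $\vec r:\mathbb{Z}\to\mathbb{R}^2$; write $\vec r_k=\vec r(k)$ and $\vec t_k=\vec r_{k+1}-\vec r_k$. $[\vec a,\vec b]$ denotes the $2\times2$ determinant. The curve is nondegenerate if $[\vec t_{k-1},\vec t_k]\ne0$ for all $k$. Its first and second centroaffine curvatures are $\kappa_k=\frac{[\vec t_k,\vec t_{k+1}]}{[\vec t_{k-1},\vec t_k]}$, $\bar\kappa_k=\frac{[\vec t_{k-1},\vec t_{k+1}]}{[\vec t_{k-1},\vec t_k]}$. Closed with period $p$: $\vec r(k+p)=\vec r(k)$ for all $k$, $p$ minimal. The closed curve is centrosymmetric if there is a point $\vec c\in\mathbb{R}^2$ such that the vertex set $\{\vec r_k:k\in\mathbb{Z}\}$ is invariant under the point reflection $\vec x\mapsto 2\vec c-\vec x$. *)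

theory Defs
  imports "HOL-Analysis.Analysis"
begin

type_synonym dcurve = "int \<Rightarrow> real^2"

definition det2 :: "real^2 \<Rightarrow> real^2 \<Rightarrow> real" where
  "det2 a b = a$1 * b$2 - a$2 * b$1"

definition tang :: "dcurve \<Rightarrow> int \<Rightarrow> real^2" where
  "tang r k = r (k + 1) - r k"

definition nondegenerate :: "dcurve \<Rightarrow> bool" where
  "nondegenerate r \<longleftrightarrow> (\<forall>k. det2 (tang r (k - 1)) (tang r k) \<noteq> 0)"

definition kappa :: "dcurve \<Rightarrow> int \<Rightarrow> real" where
  "kappa r k = det2 (tang r k) (tang r (k + 1)) / det2 (tang r (k - 1)) (tang r k)"

definition kappa_bar :: "dcurve \<Rightarrow> int \<Rightarrow> real" where
  "kappa_bar r k = det2 (tang r (k - 1)) (tang r (k + 1)) / det2 (tang r (k - 1)) (tang r k)"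

definition closed_with_period :: "dcurve \<Rightarrow> nat \<Rightarrow> bool" where
  "closed_with_period r p \<longleftrightarrow> p > 0 \<and> (\<forall>k. r (k + int p) = r k)
     \<and> (\<forall>q. 0 < q \<and> q < p \<longrightarrow> \<not> (\<forall>k. r (k + int q) = r k))"

definition centrosymmetric :: "dcurve \<Rightarrow> bool" where
  "centrosymmetric r \<longleftrightarrow> (\<exists>c::real^2. (\<lambda>x. 2 *\<^sub>R c - x) ` range r = range r)"

end

theory Submission
  imports Defs
begin

(*
  With constant curvatures kappa = b and kappa_bar = a the tangents satisfy
  t(k+1) = a t(k) - b t(k-1), so det(t(k), t(k+1)) = b^k det(t 0, t 1) and closedness forces
  b = 1 or b = -1. The sequence det(t 0, t k) obeys the same recurrence and vanishes at k = p;
  this excludes everything except b = 1, |a| < 2 and b = -1, a = 0, and the latter would make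
  the curve 2-periodic, which nondegeneracy forbids. Then, with 2 cos theta = a, the vertices are
  r k = C + cos (k theta) A + sin (k theta) B with A, B independent: an affine image of a regular
  (star) polygon, and r j = r k iff p divides j - k. A centre of symmetry of the vertex set must be
  its centroid C, and r j = 2 C - r 0 means j theta = pi (mod 2 pi), i.e. p divides 2 j but not j,
  which is possible exactly when p is even.
*)

lemma det2_self [simp]: "det2 x x = 0"
  by (simp add: det2_def)

lemma det2_diff_scaleR_right: "det2 x (u *\<^sub>R y - v *\<^sub>R z) = u * det2 x y - v * det2 x z"
  by (simp add: det2_def algebra_simps)

lemma det2_cramer:
  assumes "det2 u v \<noteq> 0"
  shows "w = (det2 u w / det2 u v) *\<^sub>R v - (det2 v w / det2 u v) *\<^sub>R u"
proof -
  have "det2 u v *\<^sub>R w = det2 u w *\<^sub>R v - det2 v w *\<^sub>R u"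
    unfolding vec_eq_iff forall_2 det2_def by (simp add: algebra_simps)
  then have "w = (1 / det2 u v) *\<^sub>R (det2 u w *\<^sub>R v - det2 v w *\<^sub>R u)"
    using assms by (metis divide_inverse_commute divide_self_if mult_1 scaleR_one scaleR_scaleR)
  then show ?thesis
    by (simp add: scaleR_diff_right)
qed

lemma det2_coords_unique:
  assumes "det2 A B \<noteq> 0" and "x *\<^sub>R A + y *\<^sub>R B = x' *\<^sub>R A + y' *\<^sub>R B"
  shows "x = x' \<and> y = y'"
proof -
  have coord_A: "det2 (u *\<^sub>R A + v *\<^sub>R B) B = u * det2 A B" for u v
    by (simp add: det2_def algebra_simps)
  have coord_B: "det2 A (u *\<^sub>R A + v *\<^sub>R B) = v * det2 A B" for u v
    by (simp add: det2_def algebra_simps)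
  show ?thesis
    using coord_A[of x y] coord_A[of x' y'] coord_B[of x y] coord_B[of x' y'] assms by auto
qed

lemma cos_sin_eq_iff_cos_diff: "cos (x::real) = cos y \<and> sin x = sin y \<longleftrightarrow> cos (x - y) = 1"
proof
  assume "cos x = cos y \<and> sin x = sin y"
  then show "cos (x - y) = 1"
    using sin_cos_squared_add[of y] by (simp add: cos_diff power2_eq_square)
next
  assume cos1: "cos (x - y) = 1"
  then have "sin (x - y) = 0"
    by (rule cos_one_sin_zero)
  then show "cos x = cos y \<and> sin x = sin y"
    using cos1 cos_add[of "x - y" y] sin_add[of "x - y" y] by simp
qed

lemma cos_sin_eq_minus_iff_cos_diff:
  "cos (x::real) = - cos y \<and> sin x = - sin y \<longleftrightarrow> cos (x - y) = - 1"
  using cos_sin_eq_iff_cos_diff[of x "y + pi"] cos_diff[of "x - y" pi] by (simp add: algebra_simps)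

lemma cos_sin_comb_add_diff:
  fixes A B :: "'a::real_vector" and x t :: real
  shows "(cos (x + t) *\<^sub>R A + sin (x + t) *\<^sub>R B) + (cos (x - t) *\<^sub>R A + sin (x - t) *\<^sub>R B)
    = (2 * cos t) *\<^sub>R (cos x *\<^sub>R A + sin x *\<^sub>R B)"
proof -
  have "cos (x + t) + cos (x - t) = 2 * cos t * cos x"
    and "sin (x + t) + sin (x - t) = 2 * cos t * sin x"
    by (simp_all add: cos_add cos_diff sin_add sin_diff)
  then show ?thesis
    by (simp add: scaleR_add_right algebra_simps flip: scaleR_add_left)
qed

lemma det2_cos_sin_comb_eq_iff:
  assumes "det2 A B \<noteq> 0"
  shows "cos x *\<^sub>R A + sin x *\<^sub>R B = cos y *\<^sub>R A + sin y *\<^sub>R B \<longleftrightarrow> cos (x - y) = 1"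
  using det2_coords_unique[OF assms, of "cos x" "sin x" "cos y" "sin y"] cos_sin_eq_iff_cos_diff[of x y]
  by auto

lemma det2_cos_sin_comb_eq_minus_iff:
  assumes "det2 A B \<noteq> 0"
  shows "cos x *\<^sub>R A + sin x *\<^sub>R B = - (cos y *\<^sub>R A + sin y *\<^sub>R B) \<longleftrightarrow> cos (x - y) = - 1"
proof -
  have "- (cos y *\<^sub>R A + sin y *\<^sub>R B) = (- cos y) *\<^sub>R A + (- sin y) *\<^sub>R B"
    by simp
  then show ?thesis
    using det2_coords_unique[OF assms, of "cos x" "sin x" "- cos y" "- sin y"]
      cos_sin_eq_minus_iff_cos_diff[of x y]
    by auto
qed

lemma int_shift_invariant_const:
  assumes "\<And>k::int. f (k + 1) = f k"
  shows "f k = f 0"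
proof (induction k rule: int_induct[where k = 0])
  case (step2 i)
  then show ?case using assms[of "i - 1"] by simp
qed (use assms in simp_all)

lemma second_order_rec_unique:
  fixes f h :: "int \<Rightarrow> 'a::real_vector"
  assumes "\<And>k. f (k + 1) = c *\<^sub>R f k - f (k - 1)" and "\<And>k. h (k + 1) = c *\<^sub>R h k - h (k - 1)"
    and "f 0 = h 0" and "f 1 = h 1"
  shows "f k = h k"
proof -
  define d where "d k = f k - h k" for k
  have rec: "d (k + 1) = c *\<^sub>R d k - d (k - 1)" for k
    using assms(1,2)[of k] by (simp add: d_def algebra_simps)
  have "d k = 0 \<and> d (k + 1) = 0"
  proof (induction k rule: int_induct[where k = 0])
    case base
    then show ?case using assms(3,4) by (simp add: d_def)
  next
    case (step1 i)
    then show ?case using rec[of "i + 1"] by simp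
  next
    case (step2 i)
    then show ?case using rec[of i] by (simp add: algebra_simps)
  qed
  then show ?thesis by (simp add: d_def)
qed

lemma chebyshev_rec_closed_form:
  fixes g :: "int \<Rightarrow> 'a::real_vector"
  assumes rec: "\<And>k. g (k + 1) = (2 * cos t) *\<^sub>R g k - g (k - 1)" and "sin t \<noteq> 0"
  shows "g k = cos (of_int k * t) *\<^sub>R g 0
    + sin (of_int k * t) *\<^sub>R ((1 / sin t) *\<^sub>R (g 1 - cos t *\<^sub>R g 0))"
proof -
  define B where "B = (1 / sin t) *\<^sub>R (g 1 - cos t *\<^sub>R g 0)"
  define h where "h x = cos x *\<^sub>R g 0 + sin x *\<^sub>R B" for x
  have "h (of_int (k + 1) * t) = (2 * cos t) *\<^sub>R h (of_int k * t) - h (of_int (k - 1) * t)" for k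
  proof -
    have succ: "of_int (k + 1) * t = of_int k * t + t" and pred: "of_int (k - 1) * t = of_int k * t - t"
      by (simp_all add: algebra_simps)
    show ?thesis
      unfolding succ pred h_def using cos_sin_comb_add_diff[of "of_int k * t" t "g 0" B]
      by (simp add: eq_diff_eq)
  qed
  then have "g k = h (of_int k * t)"
    by (rule second_order_rec_unique[OF rec]) (use \<open>sin t \<noteq> 0\<close> in \<open>simp_all add: h_def B_def\<close>)
  then show ?thesis by (simp add: h_def B_def)
qed

lemma lucas_pos_nonvanishing:
  fixes z :: "nat \<Rightarrow> real"
  assumes "c > 0" and "z 0 = 0" and "z 1 \<noteq> 0" and "\<And>n. z (n + 2) = c * z (n + 1) + z n"
  shows "z (Suc n) \<noteq> 0"
proof -
  have "z 1 * z (Suc n) > 0 \<and> z 1 * z n \<ge> 0"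
  proof (induction n)
    case 0
    then show ?case using assms by (auto simp: zero_less_mult_iff linorder_neq_iff)
  next
    case (Suc n)
    have "z 1 * z (Suc (Suc n)) = c * (z 1 * z (Suc n)) + z 1 * z n"
      using assms(4)[of n] by (simp add: algebra_simps)
    then show ?case using Suc assms(1) by (simp add: add_pos_nonneg)
  qed
  then show ?thesis by auto
qed

lemma lucas_ge2_nonvanishing:
  fixes z :: "nat \<Rightarrow> real"
  assumes "c \<ge> 2" and "z 0 = 0" and "z 1 \<noteq> 0" and "\<And>n. z (n + 2) = c * z (n + 1) - z n"
  shows "z (Suc n) \<noteq> 0"
proof -
  define w where "w n = z 1 * z n" for n
  have w1: "w 1 > 0"
    using assms(3) by (auto simp: w_def zero_less_mult_iff linorder_neq_iff)
  have rec: "w (Suc (Suc n)) = c * w (Suc n) - w n" for n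
  proof -
    have "z (Suc (Suc n)) = c * z (Suc n) - z n"
      using assms(4)[of n] by simp
    then show ?thesis
      unfolding w_def by (simp only:) (simp add: algebra_simps)
  qed
  have "w (Suc n) \<ge> w n + w 1 \<and> w n \<ge> 0"
  proof (induction n)
    case 0
    then show ?case using assms by (simp add: w_def)
  next
    case (Suc n)
    then have "c * w (Suc n) \<ge> 2 * w (Suc n)"
      using assms(1) w1 by simp
    then show ?case using Suc rec[of n] w1 by linarith
  qed
  then show ?thesis using w1 by (auto simp: w_def)
qed

lemma lucas_unit_vanishing_cases:
  fixes s :: "nat \<Rightarrow> real"
  assumes "s 0 = 0" and "s 1 \<noteq> 0" and "\<And>n. s (n + 2) = a * s (n + 1) - b * s n"
    and "b = 1 \<or> b = -1" and "s (Suc m) = 0"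
  shows "(b = 1 \<and> \<bar>a\<bar> < 2) \<or> (b = -1 \<and> a = 0)"
proof -
  have nonneg_case: "(b = 1 \<and> c < 2) \<or> (b = -1 \<and> c = 0)"
    if "c \<ge> 0" "z 0 = 0" "z 1 \<noteq> 0" "\<And>n. z (n + 2) = c * z (n + 1) - b * z n" "z (Suc m) = 0"
    for z :: "nat \<Rightarrow> real" and c
    using lucas_pos_nonvanishing[of c z m] lucas_ge2_nonvanishing[of c z m] that assms(4)
    by force
  define y where "y n = (-1) ^ n * s n" for n
  have "y (n + 2) = (- a) * y (n + 1) - b * y n" for n
  proof -
    have "y (n + 2) = (-1) ^ n * s (n + 2)"
      by (simp add: y_def)
    also have "\<dots> = (-1) ^ n * (a * s (n + 1) - b * s n)"
      by (simp only: assms(3))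
    also have "\<dots> = (- a) * y (n + 1) - b * y n"
      by (simp add: y_def algebra_simps)
    finally show ?thesis .
  qed
  moreover have "y 0 = 0" "y 1 \<noteq> 0" "y (Suc m) = 0"
    using assms(1,2,5) by (simp_all add: y_def)
  ultimately show ?thesis
    using nonneg_case[of a s] nonneg_case[of "- a" y] assms by (cases "a \<ge> 0") auto
qed

lemma closed_with_period_shift_iff_dvd:
  assumes "closed_with_period r p"
  shows "(\<forall>k. r (k + m) = r k) \<longleftrightarrow> int p dvd m"
proof -
  have p: "p > 0" "\<And>k. r (k + int p) = r k"
    and minimal: "\<And>q. 0 < q \<Longrightarrow> q < p \<Longrightarrow> \<not> (\<forall>k. r (k + int q) = r k)"
    using assms by (auto simp: closed_with_period_def)
  have multiple: "r (k + int p * l) = r k" for k l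
  proof (induction l arbitrary: k rule: int_induct[where k = 0])
    case (step1 i)
    then show ?case using p(2)[of "k + int p * i"] by (simp add: algebra_simps)
  next
    case (step2 i)
    then show ?case using step2.IH[of "k - int p"] p(2)[of "k - int p"] by (simp add: algebra_simps)
  qed simp
  show ?thesis
  proof
    assume shift: "\<forall>k. r (k + m) = r k"
    have "r (k + m mod int p) = r k" for k
      using multiple[of "k + m" "- (m div int p)"] shift
      by (simp add: minus_div_mult_eq_mod[symmetric] algebra_simps)
    then have "\<forall>k. r (k + int (nat (m mod int p))) = r k"
      using p(1) by simp
    moreover have "nat (m mod int p) < p"
      using p(1) by (simp add: nat_less_iff)
    ultimately have "nat (m mod int p) = 0"
      using minimal by blast
    moreover have "0 \<le> m mod int p"
      using p(1) by simp
    ultimately show "int p dvd m"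
      by (simp add: dvd_eq_mod_eq_0)
  next
    assume "int p dvd m"
    then show "\<forall>k. r (k + m) = r k" using multiple by auto
  qed
qed

lemma closed_with_period_range:
  assumes "closed_with_period r p"
  shows "range r = (\<lambda>n. r (int n)) ` {..<p}"
proof -
  have "p > 0" using assms by (simp add: closed_with_period_def)
  have "r k = r (int (nat (k mod int p)))" for k
  proof -
    have "int p dvd k mod int p - k"
      by (simp add: mod_eq_dvd_iff[symmetric])
    then have "r (k + (k mod int p - k)) = r k"
      using closed_with_period_shift_iff_dvd[OF assms] by blast
    then show ?thesis using \<open>p > 0\<close> by simp
  qed
  moreover have "nat (k mod int p) < p" for k
    using \<open>p > 0\<close> by (simp add: nat_less_iff)
  ultimately show ?thesis by blast
qed

lemma nondegenerate_closed_period_ge_3: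
  assumes "nondegenerate r" and "closed_with_period r p"
  shows "p \<ge> 3"
proof (rule ccontr)
  assume "\<not> p \<ge> 3"
  moreover have "p > 0" and per: "\<And>k. r (k + int p) = r k"
    using assms(2) by (auto simp: closed_with_period_def)
  ultimately consider "p = 1" | "p = 2" by linarith
  then have "tang r 1 = 0 \<or> tang r 1 = - tang r 0"
    by cases (use per[of 0] per[of 1] in \<open>simp_all add: tang_def\<close>)
  then have "det2 (tang r 0) (tang r 1) = 0"
    by (auto simp: det2_def)
  then show False
    using assms(1) unfolding nondegenerate_def by (metis diff_self)
qed

lemma periodic_tang_imp_periodic:
  assumes "closed_with_period r p" and "\<And>k. tang r (k + q) = tang r k"
  shows "r (k + q) = r k"
proof -
  define S where "S k = r (k + q) - r k" for k
  have S_step: "S (k + 1) = S k" for k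
    using assms(2)[of k] by (simp add: S_def tang_def algebra_simps)
  have S_const: "S k = S 0" for k
    by (rule int_shift_invariant_const[of S, OF S_step])
  have drift: "r (k + int n * q) = r k + real n *\<^sub>R S 0" for n k
  proof (induction n)
    case (Suc n)
    have "r (k + int (Suc n) * q) = r (k + int n * q) + S (k + int n * q)"
      by (simp add: S_def algebra_simps)
    then show ?case using Suc S_const by (simp add: algebra_simps)
  qed simp
  \<comment> \<open>after p steps of length q the drift must vanish\<close>
  have "r 0 + real p *\<^sub>R S 0 = r (0 + int p * q)"
    by (rule drift[symmetric])
  also have "\<dots> = r 0"
    using closed_with_period_shift_iff_dvd[OF assms(1), of "int p * q"] by (auto dest: spec[of _ 0])
  finally have "r 0 + real p *\<^sub>R S 0 = r 0" .
  then have "real p *\<^sub>R S 0 = 0"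
    by simp
  moreover have "p > 0" using assms(1) by (simp add: closed_with_period_def)
  ultimately show ?thesis using S_const[of k] by (simp add: S_def)
qed

lemma point_reflection_invariant_sum:
  fixes S :: "'a::real_vector set"
  assumes "finite S" and "(\<lambda>x. 2 *\<^sub>R c - x) ` S = S"
  shows "(\<Sum>x\<in>S. x) = real (card S) *\<^sub>R c"
proof -
  have "inj_on (\<lambda>x. 2 *\<^sub>R c - x) S"
    by (rule inj_onI) simp
  then have "(\<Sum>x\<in>S. x) = (\<Sum>x\<in>S. 2 *\<^sub>R c - x)"
    using sum.reindex[of "\<lambda>x. 2 *\<^sub>R c - x" S id] assms(2) by simp
  also have "\<dots> = real (card S) *\<^sub>R (2 *\<^sub>R c) - (\<Sum>x\<in>S. x)"
    by (simp add: sum_subtractf sum_constant_scaleR del: sum_constant)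
  finally have "(\<Sum>x\<in>S. x) + (\<Sum>x\<in>S. x) = real (card S) *\<^sub>R c + real (card S) *\<^sub>R c"
    by (simp add: scaleR_2 eq_diff_eq algebra_simps)
  then show ?thesis by (metis scaleR_2 scaleR_cancel_left scaleR_scaleR zero_neq_numeral)
qed

lemma sum_periodic_shift:
  fixes f :: "int \<Rightarrow> 'a::cancel_comm_monoid_add"
  assumes "\<And>k. f (k + int p) = f k"
  shows "(\<Sum>n<p. f (int n + 1)) = (\<Sum>n<p. f (int n))"
proof -
  have "f (int p) = f 0"
    using assms[of 0] by simp
  then have "(\<Sum>n<p. f (int n)) + f 0 = f 0 + (\<Sum>n<p. f (int (Suc n)))"
    using sum.lessThan_Suc_shift[of "\<lambda>n. f (int n)" p] by simp
  then show ?thesis by (simp add: add.commute)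
qed

locale closed_elliptic_curve =
  fixes r :: dcurve and C A B :: "real^2" and \<theta> :: real and p :: nat
  assumes basis: "det2 A B \<noteq> 0"
    and angle: "cos \<theta> \<noteq> 1"
    and param: "\<And>k. r k = C + (cos (of_int k * \<theta>) *\<^sub>R A + sin (of_int k * \<theta>) *\<^sub>R B)"
    and closed: "closed_with_period r p"
begin

definition offset :: "int \<Rightarrow> real^2" where
  "offset k = cos (of_int k * \<theta>) *\<^sub>R A + sin (of_int k * \<theta>) *\<^sub>R B"

lemma vertex_eq_offset: "r k = C + offset k"
  by (simp add: param offset_def)

lemma period_pos: "p > 0"
  using closed by (simp add: closed_with_period_def)

lemma vertex_eq_iff: "r j = r k \<longleftrightarrow> cos (of_int (j - k) * \<theta>) = 1"
  using det2_cos_sin_comb_eq_iff[OF basis, of "of_int j * \<theta>" "of_int k * \<theta>"]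
  by (simp add: vertex_eq_offset offset_def left_diff_distrib)

lemma vertex_eq_reflection_iff: "r j = 2 *\<^sub>R C - r k \<longleftrightarrow> cos (of_int (j - k) * \<theta>) = - 1"
proof -
  have "r j = 2 *\<^sub>R C - r k \<longleftrightarrow> offset j = - offset k"
    by (auto simp: vertex_eq_offset scaleR_2 algebra_simps eq_neg_iff_add_eq_0)
  then show ?thesis
    using det2_cos_sin_comb_eq_minus_iff[OF basis, of "of_int j * \<theta>" "of_int k * \<theta>"]
    by (simp add: offset_def left_diff_distrib)
qed

lemma cos_eq_1_iff_dvd: "cos (of_int m * \<theta>) = 1 \<longleftrightarrow> int p dvd m"
  using closed_with_period_shift_iff_dvd[OF closed, of m] vertex_eq_iff by simp

lemma vertex_inj_on_period: "inj_on (\<lambda>n. r (int n)) {..<p}"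
proof (rule inj_onI)
  fix i j
  assume "i \<in> {..<p}" "j \<in> {..<p}" "r (int i) = r (int j)"
  then have "int p dvd int i - int j"
    using vertex_eq_iff cos_eq_1_iff_dvd by blast
  then have "int i mod int p = int j mod int p"
    by (simp only: mod_eq_dvd_iff)
  with \<open>i \<in> {..<p}\<close> \<open>j \<in> {..<p}\<close> show "i = j"
    by simp
qed

lemma card_range: "card (range r) = p"
  using closed_with_period_range[OF closed] vertex_inj_on_period by (simp add: card_image)

lemma finite_range: "finite (range r)"
  using closed_with_period_range[OF closed] by simp

lemma offset_rec: "offset (k + 1) + offset (k - 1) = (2 * cos \<theta>) *\<^sub>R offset k"
proof -
  have "of_int (k + 1) * \<theta> = of_int k * \<theta> + \<theta>" and "of_int (k - 1) * \<theta> = of_int k * \<theta> - \<theta>"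
    by (simp_all add: algebra_simps)
  then show ?thesis
    unfolding offset_def by (simp only: cos_sin_comb_add_diff)
qed

lemma sum_offset_period: "(\<Sum>n<p. offset (int n)) = 0"
proof -
  have offset_periodic: "offset (k + int p) = offset k" for k
    using closed vertex_eq_offset by (simp add: closed_with_period_def)
  have "(\<Sum>n<p. offset (int n + 1) + offset (int n - 1)) = (\<Sum>n<p. (2 * cos \<theta>) *\<^sub>R offset (int n))"
    by (intro sum.cong) (simp_all add: offset_rec)
  moreover have "(\<Sum>n<p. offset (int n + 1)) = (\<Sum>n<p. offset (int n))"
    by (rule sum_periodic_shift[of offset, OF offset_periodic])
  moreover have "(\<Sum>n<p. offset (int n - 1)) = (\<Sum>n<p. offset (int n))"
  proof -
    have "offset (k + int p - 1) = offset (k - 1)" for k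
      using offset_periodic[of "k - 1"] by (simp add: algebra_simps)
    then show ?thesis
      using sum_periodic_shift[of "\<lambda>k. offset (k - 1)" p] by simp
  qed
  ultimately have "(2 - 2 * cos \<theta>) *\<^sub>R (\<Sum>n<p. offset (int n)) = 0"
    by (simp add: sum.distrib scaleR_sum_right[symmetric] scaleR_diff_left scaleR_2)
  then show ?thesis using angle by simp
qed

lemma sum_range: "(\<Sum>x\<in>range r. x) = real p *\<^sub>R C"
proof -
  have "(\<Sum>x\<in>range r. x) = (\<Sum>n<p. C + offset (int n))"
    using closed_with_period_range[OF closed] vertex_inj_on_period by (simp add: sum.reindex vertex_eq_offset)
  then show ?thesis
    using sum_offset_period by (simp add: sum.distrib sum_constant_scaleR del: sum_constant)
qed

lemma cos_double_multiple: "cos (of_int (2 * m) * \<theta>) = 2 * cos (of_int m * \<theta>) ^ 2 - 1"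
  using cos_double_cos[of "of_int m * \<theta>"] by (simp add: mult.assoc)

lemma even_period_if_centrosymmetric:
  assumes "centrosymmetric r"
  shows "even p"
proof (rule ccontr)
  assume "odd p"
  obtain c where c: "(\<lambda>x. 2 *\<^sub>R c - x) ` range r = range r"
    using assms by (auto simp: centrosymmetric_def)
  have "real p *\<^sub>R c = real p *\<^sub>R C"
    using point_reflection_invariant_sum[OF finite_range c] card_range sum_range by auto
  then have "c = C"
    using period_pos by simp
  have "2 *\<^sub>R C - r 0 \<in> (\<lambda>x. 2 *\<^sub>R C - x) ` range r"
    by (intro imageI rangeI)
  then have "2 *\<^sub>R C - r 0 \<in> range r"
    using c[unfolded \<open>c = C\<close>] by (simp only:)
  then obtain j where "r j = 2 *\<^sub>R C - r 0"
    by (metis rangeE)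
  then have half_turn: "cos (of_int j * \<theta>) = - 1"
    using vertex_eq_reflection_iff[of j 0] by simp
  then have "cos (of_int (2 * j) * \<theta>) = 1"
    using cos_double_multiple[of j] by simp
  then have "int p dvd 2 * j"
    using cos_eq_1_iff_dvd by blast
  moreover have "coprime (int p) 2"
    using \<open>odd p\<close> by (simp add: coprime_commute)
  ultimately have "int p dvd j"
    by (simp add: coprime_dvd_mult_right_iff)
  then have "cos (of_int j * \<theta>) = 1"
    using cos_eq_1_iff_dvd by blast
  then show False
    using half_turn by simp
qed

lemma centrosymmetric_if_even_period:
  assumes "even p"
  shows "centrosymmetric r"
proof -
  obtain q where q: "p = 2 * q"
    using assms by blast
  have "\<not> int p dvd int q"
    using period_pos q by (auto dest: zdvd_imp_le)
  then have "cos (of_int (int q) * \<theta>) \<noteq> 1"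
    using cos_eq_1_iff_dvd by blast
  moreover have "2 * cos (of_int (int q) * \<theta>) ^ 2 - 1 = 1"
    using cos_eq_1_iff_dvd[of "2 * int q"] cos_double_multiple[of "int q"] q by simp
  ultimately have "cos (of_int (int q) * \<theta>) = - 1"
    by (simp add: power2_eq_1_iff)
  then have shift: "r (k + int q) = 2 *\<^sub>R C - r k" for k
    using vertex_eq_reflection_iff[of "k + int q" k] by simp
  have "(\<lambda>x. 2 *\<^sub>R C - x) ` range r = range r"
  proof (intro set_eqI iffI)
    fix x
    assume "x \<in> (\<lambda>x. 2 *\<^sub>R C - x) ` range r"
    then obtain k where "x = 2 *\<^sub>R C - r k"
      by blast
    then show "x \<in> range r"
      using shift[of k] by (metis rangeI)
  next
    fix x
    assume "x \<in> range r"
    then obtain k where "x = r k"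
      by blast
    then have "x = 2 *\<^sub>R C - r (k - int q)"
      using shift[of "k - int q"] by simp
    then show "x \<in> (\<lambda>x. 2 *\<^sub>R C - x) ` range r"
      by blast
  qed
  then show ?thesis
    by (auto simp: centrosymmetric_def)
qed

lemma centrosymmetric_iff_even: "centrosymmetric r \<longleftrightarrow> even p"
  using even_period_if_centrosymmetric centrosymmetric_if_even_period by blast

end

locale constant_curvature_curve =
  fixes r :: dcurve and a b :: real
  assumes nondeg: "nondegenerate r"
    and kappa_eq: "\<And>k. kappa r k = b"
    and kappa_bar_eq: "\<And>k. kappa_bar r k = a"
begin

lemma det2_tang_nonzero: "det2 (tang r (k - 1)) (tang r k) \<noteq> 0"
  using nondeg by (simp add: nondegenerate_def)

lemma tang_rec: "tang r (k + 1) = a *\<^sub>R tang r k - b *\<^sub>R tang r (k - 1)"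
  using det2_cramer[OF det2_tang_nonzero[of k], of "tang r (k + 1)"] kappa_eq[of k] kappa_bar_eq[of k]
  by (simp add: kappa_def kappa_bar_def)

lemma det2_tang_succ: "det2 (tang r k) (tang r (k + 1)) = b * det2 (tang r (k - 1)) (tang r k)"
  using kappa_eq[of k] det2_tang_nonzero[of k] by (simp add: kappa_def field_simps)

lemma det2_tang_power: "det2 (tang r (int n)) (tang r (int n + 1)) = b ^ n * det2 (tang r 0) (tang r 1)"
proof (induction n)
  case (Suc n)
  then show ?case
    using det2_tang_succ[of "int n + 1"] by (simp add: algebra_simps)
qed simp

lemma det2_tang0_rec:
  "det2 (tang r 0) (tang r (int (n + 2)))
    = a * det2 (tang r 0) (tang r (int (n + 1))) - b * det2 (tang r 0) (tang r (int n))"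
proof -
  have "tang r (int (n + 2)) = a *\<^sub>R tang r (int (n + 1)) - b *\<^sub>R tang r (int n)"
    using tang_rec[of "int n + 1"] by (simp add: add.commute)
  then show ?thesis
    by (simp add: det2_diff_scaleR_right)
qed

lemma affine_rec_centre:
  assumes "b = 1" and "a \<noteq> 2"
  obtains C where "\<And>k. r (k + 1) - C = a *\<^sub>R (r k - C) - (r (k - 1) - C)"
proof -
  define E where "E k = r (k + 1) + r (k - 1) - a *\<^sub>R r k" for k
  have "E (k + 1) = E k" for k
    using tang_rec[of k] assms(1) by (simp add: E_def tang_def algebra_simps)
  then have E_const: "E k = E 0" for k
    by (rule int_shift_invariant_const)
  define C where "C = (1 / (2 - a)) *\<^sub>R E 0"
  have E_C: "E k = (2 - a) *\<^sub>R C" for k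
    using assms(2) E_const[of k] by (simp add: C_def)
  have "r (k + 1) - C = a *\<^sub>R (r k - C) - (r (k - 1) - C)" for k
    using E_C[of k] unfolding E_def vec_eq_iff forall_2 by (simp add: algebra_simps)
  then show thesis by (rule that)
qed

lemma elliptic_form:
  assumes "b = 1" and "\<bar>a\<bar> < 2"
  obtains A B \<theta> C where "det2 A B \<noteq> 0" and "cos (\<theta> :: real) \<noteq> 1"
    and "\<And>k. r k = C + (cos (of_int k * \<theta>) *\<^sub>R A + sin (of_int k * \<theta>) *\<^sub>R B)"
proof -
  have "a \<noteq> 2"
    using assms(2) by simp
  then obtain C where C: "\<And>k. r (k + 1) - C = a *\<^sub>R (r k - C) - (r (k - 1) - C)"
    using affine_rec_centre[OF assms(1)] by blast
  define \<theta> where "\<theta> = arccos (a / 2)"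
  have cos_\<theta>: "cos \<theta> = a / 2" and sin_\<theta>: "sin \<theta> \<noteq> 0"
    using assms(2) by (simp_all add: \<theta>_def sin_arccos_nonzero)
  define g where "g k = r k - C" for k
  define B where "B = (1 / sin \<theta>) *\<^sub>R (g 1 - cos \<theta> *\<^sub>R g 0)"
  have g_rec: "g (k + 1) = (2 * cos \<theta>) *\<^sub>R g k - g (k - 1)" for k
    using C[of k] by (simp add: g_def cos_\<theta>)
  have g_form: "g k = cos (of_int k * \<theta>) *\<^sub>R g 0 + sin (of_int k * \<theta>) *\<^sub>R B" for k
    unfolding B_def by (rule chebyshev_rec_closed_form[OF g_rec sin_\<theta>])
  have "g 2 = a *\<^sub>R g 1 - g 0"
    using g_rec[of 1] by (simp add: cos_\<theta>)
  then have tang1: "tang r 1 = (a - 1) *\<^sub>R g 1 - g 0"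
    by (simp add: tang_def g_def scaleR_diff_left)
  have tang0: "tang r 0 = g 1 - g 0"
    by (simp add: tang_def g_def)
  have "det2 (tang r 0) (tang r 1) = (2 - a) * det2 (g 0) (g 1)"
    unfolding tang0 tang1 by (simp add: det2_def algebra_simps)
  moreover have "det2 (g 0) (g 1) = sin \<theta> * det2 (g 0) B"
    using g_form[of 1] by (simp add: det2_def algebra_simps)
  ultimately have "det2 (g 0) B \<noteq> 0"
    using det2_tang_nonzero[of 1] by auto
  moreover have "cos \<theta> \<noteq> 1"
    using cos_\<theta> assms(2) by auto
  moreover have "r k = C + (cos (of_int k * \<theta>) *\<^sub>R g 0 + sin (of_int k * \<theta>) *\<^sub>R B)" for k
    using g_form[of k] unfolding g_def by (simp add: diff_eq_eq ac_simps)
  ultimately show thesis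
    by (rule that)
qed

end

locale closed_constant_curvature_curve = constant_curvature_curve +
  fixes p :: nat
  assumes closed: "closed_with_period r p"
begin

lemma tang_periodic: "tang r (k + int p) = tang r k"
proof -
  have per: "r (j + int p) = r j" for j
    using closed by (simp add: closed_with_period_def)
  show ?thesis
    using per[of "k + 1"] per[of k] by (simp add: tang_def add_ac)
qed

lemma curvature_unit: "b = 1 \<or> b = -1"
proof -
  have "b ^ p * det2 (tang r 0) (tang r 1) = det2 (tang r 0) (tang r 1)"
    using det2_tang_power[of p] tang_periodic[of 0] tang_periodic[of 1] by (simp add: add.commute)
  then have "b ^ p = 1"
    using det2_tang_nonzero[of 1] by simp
  moreover have "p > 0"
    using closed by (simp add: closed_with_period_def)
  ultimately show ?thesis
    using power_eq_1_iff[of b p] by auto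
qed

lemma curvatures_elliptic: "b = 1 \<and> \<bar>a\<bar> < 2"
proof -
  define s where "s n = det2 (tang r 0) (tang r (int n))" for n
  have "p \<ge> 3"
    using nondegenerate_closed_period_ge_3[OF nondeg closed] .
  moreover have "s (Suc (p - 1)) = 0"
    using tang_periodic[of 0] \<open>p \<ge> 3\<close> by (simp add: s_def)
  moreover have "s 0 = 0" and "s 1 \<noteq> 0"
    using det2_tang_nonzero[of 1] by (simp_all add: s_def)
  moreover have "s (n + 2) = a * s (n + 1) - b * s n" for n
    unfolding s_def by (rule det2_tang0_rec)
  moreover have "\<not> (b = -1 \<and> a = 0)"
  proof
    assume "b = -1 \<and> a = 0"
    then have "tang r (k + 2) = tang r k" for k
      using tang_rec[of "k + 1"] by (simp add: add.assoc)
    then have "r (k + 2) = r k" for k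
      by (rule periodic_tang_imp_periodic[OF closed])
    then have "int p dvd 2"
      using closed_with_period_shift_iff_dvd[OF closed] by blast
    then show False
      using \<open>p \<ge> 3\<close> zdvd_imp_le[of "int p" 2] by simp
  qed
  ultimately show ?thesis
    using lucas_unit_vanishing_cases[of s a b] curvature_unit by blast
qed

end

theorem corollary3p14:
  fixes r :: "int \<Rightarrow> real^2" and p :: nat
  assumes "nondegenerate r"
    and "\<exists>c. \<forall>k. kappa r k = c"
    and "\<exists>c. \<forall>k. kappa_bar r k = c"
    and "closed_with_period r p"
  shows "centrosymmetric r \<longleftrightarrow> even p"
proof -
  obtain b where "\<And>k. kappa r k = b"
    using assms(2) by blast
  moreover obtain a where "\<And>k. kappa_bar r k = a"
    using assms(3) by blast
  ultimately interpret closed_constant_curvature_curve r a b p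
    using assms(1,4) by unfold_locales
  have elliptic: "b = 1" "\<bar>a\<bar> < 2"
    using curvatures_elliptic by auto
  obtain A B \<theta> C where "det2 A B \<noteq> 0" and "cos (\<theta> :: real) \<noteq> 1"
    and "\<And>k. r k = C + (cos (of_int k * \<theta>) *\<^sub>R A + sin (of_int k * \<theta>) *\<^sub>R B)"
    using elliptic_form[OF elliptic] by metis
  then interpret closed_elliptic_curve r C A B \<theta> p
    using assms(4) by unfold_locales
  show ?thesis
    by (rule centrosymmetric_iff_even)
qed

end
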